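(* Let $\mathbf{L}=(L,\le)$ be a finite nontrivial join-semilattice with greatest element $1$ and let $(R,\vee,\circ)$ be a simple subsemiring of $(\mathrm{JM}_1(\mathbf{L}),\vee,\circ)$ with $|R|>2$ such that $f_{a,b}\in R$ for all $a\in L\setminus\{1\}$ and $b\in L$. Then $(L,\vee)$, with action $f\cdot x=f(x)$, is an irreducible $R$-semimodule.
   Context: $\mathrm{JM}_1(\mathbf{L})$ is the set of maps $f:L\to L$ with $f(x\vee y)=f(x)\vee f(y)$ and $f(1)=1$, a semiring under pointwise join and composition. A semiring is simple if its only congruences (equivalences compatible with addition and with left and right multiplication) are the identity and the full relation. $f_{a,b}(x)=b$ if $x\le a$ and $f_{a,b}(x)=1$ otherwise. An $R$-semimodule is a commutative semigroup $(M,+)$ with an action $R\times M\to M$ satisfying $r(sx)=(rs)x$, $(r+s)x=rx+sx$, $r(x+y)=rx+ry$. A subsemimodule is a subsemigroup closed under the action; a semimodule congruence is an equivalence compatible with $+$ and the action. $M$ is quasitrivial if $rx=sx$ for all $r,s,x$; id-quasitrivial if $rx=x$ for all $r,x$; sub-irreducible if not quasitrivial and all proper subsemimodules are id-quasitrivial; quotient-irreducible if not quasitrivial and its only congruences are the identity and $M\times M$; irreducible if both. *)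

theory Defs
  imports Main
begin

text \<open>The lattice L is modelled as a type of class finite, semilattice_sup, order_top;
  the join is sup, the greatest element is top.\<close>

definition JM1 :: "('a::{semilattice_sup,top} \<Rightarrow> 'a) set" where
  "JM1 = {f. (\<forall>x y. f (sup x y) = sup (f x) (f y)) \<and> f top = top}"

definition jm_add :: "('a::semilattice_sup \<Rightarrow> 'a) \<Rightarrow> ('a \<Rightarrow> 'a) \<Rightarrow> ('a \<Rightarrow> 'a)" where
  "jm_add f g = (\<lambda>x. sup (f x) (g x))"

definition subsemiring_JM1 :: "('a::{semilattice_sup,top} \<Rightarrow> 'a) set \<Rightarrow> bool" where
  "subsemiring_JM1 R \<longleftrightarrow> R \<subseteq> JM1 \<and> (\<forall>f\<in>R. \<forall>g\<in>R. jm_add f g \<in> R \<and> f \<circ> g \<in> R)"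

definition semiring_congruence ::
  "'r set \<Rightarrow> ('r \<Rightarrow> 'r \<Rightarrow> 'r) \<Rightarrow> ('r \<Rightarrow> 'r \<Rightarrow> 'r) \<Rightarrow> ('r \<times> 'r) set \<Rightarrow> bool" where
  "semiring_congruence R add mul \<theta> \<longleftrightarrow> equiv R \<theta> \<and>
     (\<forall>a b c. (a, b) \<in> \<theta> \<and> c \<in> R \<longrightarrow>
        (add a c, add b c) \<in> \<theta> \<and> (add c a, add c b) \<in> \<theta> \<and>
        (mul a c, mul b c) \<in> \<theta> \<and> (mul c a, mul c b) \<in> \<theta>)"

definition simple_semiring :: "'r set \<Rightarrow> ('r \<Rightarrow> 'r \<Rightarrow> 'r) \<Rightarrow> ('r \<Rightarrow> 'r \<Rightarrow> 'r) \<Rightarrow> bool" where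
  "simple_semiring R add mul \<longleftrightarrow>
     (\<forall>\<theta>. semiring_congruence R add mul \<theta> \<longrightarrow> \<theta> = Id_on R \<or> \<theta> = R \<times> R)"

definition fab :: "'a::{order,top} \<Rightarrow> 'a \<Rightarrow> 'a \<Rightarrow> 'a" where
  "fab a b = (\<lambda>x. if x \<le> a then b else top)"

definition semimodule ::
  "'r set \<Rightarrow> ('r \<Rightarrow> 'r \<Rightarrow> 'r) \<Rightarrow> ('r \<Rightarrow> 'r \<Rightarrow> 'r) \<Rightarrow>
   'm set \<Rightarrow> ('m \<Rightarrow> 'm \<Rightarrow> 'm) \<Rightarrow> ('r \<Rightarrow> 'm \<Rightarrow> 'm) \<Rightarrow> bool" where
  "semimodule R radd rmul M add act \<longleftrightarrow>
     (\<forall>x\<in>M. \<forall>y\<in>M. add x y \<in> M) \<and>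
     (\<forall>x\<in>M. \<forall>y\<in>M. \<forall>z\<in>M. add (add x y) z = add x (add y z)) \<and>
     (\<forall>x\<in>M. \<forall>y\<in>M. add x y = add y x) \<and>
     (\<forall>r\<in>R. \<forall>x\<in>M. act r x \<in> M) \<and>
     (\<forall>r\<in>R. \<forall>s\<in>R. \<forall>x\<in>M. act r (act s x) = act (rmul r s) x) \<and>
     (\<forall>r\<in>R. \<forall>s\<in>R. \<forall>x\<in>M. act (radd r s) x = add (act r x) (act s x)) \<and>
     (\<forall>r\<in>R. \<forall>x\<in>M. \<forall>y\<in>M. act r (add x y) = add (act r x) (act r y))"

definition subsemimodule :: "'r set \<Rightarrow> 'm set \<Rightarrow> ('m \<Rightarrow> 'm \<Rightarrow> 'm) \<Rightarrow> ('r \<Rightarrow> 'm \<Rightarrow> 'm) \<Rightarrow> 'm set \<Rightarrow> bool" where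
  "subsemimodule R M add act N \<longleftrightarrow> N \<subseteq> M \<and>
     (\<forall>x\<in>N. \<forall>y\<in>N. add x y \<in> N) \<and> (\<forall>r\<in>R. \<forall>x\<in>N. act r x \<in> N)"

definition quasitrivial :: "'r set \<Rightarrow> 'm set \<Rightarrow> ('r \<Rightarrow> 'm \<Rightarrow> 'm) \<Rightarrow> bool" where
  "quasitrivial R M act \<longleftrightarrow> (\<forall>r\<in>R. \<forall>s\<in>R. \<forall>x\<in>M. act r x = act s x)"

definition id_quasitrivial :: "'r set \<Rightarrow> 'm set \<Rightarrow> ('r \<Rightarrow> 'm \<Rightarrow> 'm) \<Rightarrow> bool" where
  "id_quasitrivial R M act \<longleftrightarrow> (\<forall>r\<in>R. \<forall>x\<in>M. act r x = x)"

definition semimodule_congruence ::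
  "'r set \<Rightarrow> 'm set \<Rightarrow> ('m \<Rightarrow> 'm \<Rightarrow> 'm) \<Rightarrow> ('r \<Rightarrow> 'm \<Rightarrow> 'm) \<Rightarrow> ('m \<times> 'm) set \<Rightarrow> bool" where
  "semimodule_congruence R M add act \<theta> \<longleftrightarrow> equiv M \<theta> \<and>
     (\<forall>x y z. (x, y) \<in> \<theta> \<and> z \<in> M \<longrightarrow> (add x z, add y z) \<in> \<theta> \<and> (add z x, add z y) \<in> \<theta>) \<and>
     (\<forall>r x y. r \<in> R \<and> (x, y) \<in> \<theta> \<longrightarrow> (act r x, act r y) \<in> \<theta>)"

definition sub_irreducible :: "'r set \<Rightarrow> 'm set \<Rightarrow> ('m \<Rightarrow> 'm \<Rightarrow> 'm) \<Rightarrow> ('r \<Rightarrow> 'm \<Rightarrow> 'm) \<Rightarrow> bool" where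
  "sub_irreducible R M add act \<longleftrightarrow> \<not> quasitrivial R M act \<and>
     (\<forall>N. subsemimodule R M add act N \<and> N \<noteq> M \<longrightarrow> id_quasitrivial R N act)"

definition quotient_irreducible :: "'r set \<Rightarrow> 'm set \<Rightarrow> ('m \<Rightarrow> 'm \<Rightarrow> 'm) \<Rightarrow> ('r \<Rightarrow> 'm \<Rightarrow> 'm) \<Rightarrow> bool" where
  "quotient_irreducible R M add act \<longleftrightarrow> \<not> quasitrivial R M act \<and>
     (\<forall>\<theta>. semimodule_congruence R M add act \<theta> \<longrightarrow> \<theta> = Id_on M \<or> \<theta> = M \<times> M)"

definition irreducible_semimodule ::
  "'r set \<Rightarrow> ('r \<Rightarrow> 'r \<Rightarrow> 'r) \<Rightarrow> ('r \<Rightarrow> 'r \<Rightarrow> 'r) \<Rightarrow>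
   'm set \<Rightarrow> ('m \<Rightarrow> 'm \<Rightarrow> 'm) \<Rightarrow> ('r \<Rightarrow> 'm \<Rightarrow> 'm) \<Rightarrow> bool" where
  "irreducible_semimodule R radd rmul M add act \<longleftrightarrow>
     semimodule R radd rmul M add act \<and>
     sub_irreducible R M add act \<and> quotient_irreducible R M add act"

end

theory Submission
  imports Defs
begin

text \<open>Since \<open>f\<^sub>x\<^sub>,\<^sub>b(x) = b\<close> for every \<open>x \<noteq> 1\<close>, the action of \<open>R\<close> can move any element
  other than \<open>1\<close> to any element of \<open>L\<close>. Hence a subsemimodule containing an element other
  than \<open>1\<close> is all of \<open>L\<close>, and a congruence identifying some \<open>u \<noteq> v\<close>, say with \<open>u\<close> not below \<open>v\<close>, identifies
  \<open>1 = f\<^sub>v\<^sub>,\<^sub>b(u)\<close> with \<open>b = f\<^sub>v\<^sub>,\<^sub>b(v)\<close> for every \<open>b\<close>, so it is total.\<close>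

lemma fab_at_self [simp]: "fab a b a = b"
  by (simp add: fab_def)

lemma fab_outside [simp]: "\<not> x \<le> a \<Longrightarrow> fab a b x = top"
  by (simp add: fab_def)

lemma semimodule_of_JM1:
  assumes "R \<subseteq> JM1"
  shows "semimodule R jm_add (\<circ>) (UNIV :: 'a::{semilattice_sup,top} set) sup (\<lambda>f x. f x)"
proof -
  have "f (sup x y) = sup (f x) (f y)" if "f \<in> R" for f and x y :: 'a
    using assms that unfolding JM1_def by blast
  then show ?thesis
    unfolding semimodule_def jm_add_def by (auto simp: sup.assoc sup.left_commute sup.commute)
qed

lemma not_quasitrivial_if_fab_in:
  fixes R :: "('a::{semilattice_sup,order_top} \<Rightarrow> 'a) set"
  assumes a: "a \<noteq> top" and fab_in: "\<And>b. fab a b \<in> R"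
  shows "\<not> quasitrivial R UNIV (\<lambda>f x. f x)"
proof
  assume "quasitrivial R UNIV (\<lambda>f x. f x)"
  then have "fab a a a = fab a top a"
    unfolding quasitrivial_def using fab_in by blast
  with a show False by simp
qed

lemma proper_subsemimodule_subset_top:
  fixes R :: "('a::{semilattice_sup,order_top} \<Rightarrow> 'a) set"
  assumes fab_in: "\<And>a b. a \<noteq> top \<Longrightarrow> fab a b \<in> R"
    and N: "subsemimodule R UNIV sup (\<lambda>f x. f x) N" "N \<noteq> UNIV"
  shows "N \<subseteq> {top}"
proof
  fix x assume x: "x \<in> N"
  show "x \<in> {top}"
  proof (rule ccontr)
    assume "x \<notin> {top}"
    then have "fab x b x \<in> N" for b
      using fab_in N(1) x unfolding subsemimodule_def by blast
    then have "N = UNIV" by auto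
    with N(2) show False ..
  qed
qed

lemma id_quasitrivial_top:
  assumes "R \<subseteq> JM1" "N \<subseteq> {top :: 'a::{semilattice_sup,top}}"
  shows "id_quasitrivial R N (\<lambda>f x. f x)"
  using assms unfolding id_quasitrivial_def JM1_def by auto

lemma semimodule_congruence_total_if_not_le:
  fixes R :: "('a::{semilattice_sup,order_top} \<Rightarrow> 'a) set"
  assumes fab_in: "\<And>a b. a \<noteq> top \<Longrightarrow> fab a b \<in> R"
    and C: "semimodule_congruence R UNIV sup (\<lambda>f x. f x) \<theta>"
    and uv: "(u, v) \<in> \<theta>" "\<not> u \<le> v"
  shows "\<theta> = UNIV \<times> UNIV"
proof -
  have eq: "equiv UNIV \<theta>"
    and act: "\<And>r x y. r \<in> R \<Longrightarrow> (x, y) \<in> \<theta> \<Longrightarrow> (r x, r y) \<in> \<theta>"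
    using C unfolding semimodule_congruence_def by auto
  have "v \<noteq> top" using uv(2) by auto
  then have "(fab v b u, fab v b v) \<in> \<theta>" for b
    using act fab_in uv(1) by blast
  then have top_b: "(top, b) \<in> \<theta>" for b
    using uv(2) by simp
  have "(p, q) \<in> \<theta>" for p q
    using eq top_b[of p] top_b[of q] unfolding equiv_def sym_def trans_def by blast
  then show ?thesis by auto
qed

lemma semimodule_congruence_trivial:
  fixes R :: "('a::{semilattice_sup,order_top} \<Rightarrow> 'a) set"
  assumes fab_in: "\<And>a b. a \<noteq> top \<Longrightarrow> fab a b \<in> R"
    and C: "semimodule_congruence R UNIV sup (\<lambda>f x. f x) \<theta>"
  shows "\<theta> = Id_on UNIV \<or> \<theta> = UNIV \<times> UNIV"
proof (cases "\<theta> \<subseteq> Id")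
  case True
  moreover have "Id \<subseteq> \<theta>"
    using C unfolding semimodule_congruence_def equiv_def refl_on_def by auto
  ultimately show ?thesis by auto
next
  case False
  then obtain x y where xy: "(x, y) \<in> \<theta>" "x \<noteq> y" by auto
  have "(y, x) \<in> \<theta>"
    using C xy(1) unfolding semimodule_congruence_def equiv_def sym_def by blast
  with xy have "\<exists>u v. (u, v) \<in> \<theta> \<and> \<not> u \<le> v"
    by (metis antisym)
  then show ?thesis
    using semimodule_congruence_total_if_not_le[OF fab_in C] by blast
qed

theorem proposition4p4:
  fixes R :: "('a::{finite, semilattice_sup, order_top} \<Rightarrow> 'a) set"
  assumes nontrivial: "\<exists>x::'a. x \<noteq> top"
    and sub: "subsemiring_JM1 R"
    and simple: "simple_semiring R jm_add (\<circ>)"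
    and card: "card R > 2"
    and fab_in: "\<forall>a b. a \<noteq> top \<longrightarrow> fab a b \<in> R"
  shows "irreducible_semimodule R jm_add (\<circ>) (UNIV :: 'a set) sup (\<lambda>f x. f x)"
proof -
  have R_JM1: "R \<subseteq> JM1" using sub unfolding subsemiring_JM1_def by blast
  have fab: "\<And>a b. a \<noteq> top \<Longrightarrow> fab a b \<in> R" using fab_in by blast
  obtain a :: 'a where "a \<noteq> top" using nontrivial by blast
  then have nq: "\<not> quasitrivial R UNIV (\<lambda>f x. f x)"
    using not_quasitrivial_if_fab_in fab by blast
  have "sub_irreducible R UNIV sup (\<lambda>f x. f x)"
    unfolding sub_irreducible_def
    using nq proper_subsemimodule_subset_top[OF fab] id_quasitrivial_top[OF R_JM1] by blast
  moreover have "quotient_irreducible R UNIV sup (\<lambda>f x. f x)"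
    unfolding quotient_irreducible_def using nq semimodule_congruence_trivial[OF fab] by blast
  ultimately show ?thesis
    unfolding irreducible_semimodule_def using semimodule_of_JM1[OF R_JM1] by blast
qed

end
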